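(* Let $G$ and $H$ be finite simple graphs with $\gamma_{sR}(G)\geq 0$ and $\gamma_{sR}(H)\geq 0$. Then $\gamma_{sR}(G\vee H)\leq \gamma_{sR}(G)+\gamma_{sR}(H)$.
   Context: For a graph $G=(V,E)$ and $x\in V$, $N_G[x]=\{x\}\cup\{y: xy\in E\}$. A signed Roman dominating function (SRDF) on $G$ is a function $f:V\to\{-1,1,2\}$ such that (a) $\sum_{y\in N_G[x]}f(y)\geq 1$ for every $x\in V$, and (b) every vertex $x$ with $f(x)=-1$ is adjacent to at least one vertex $y$ with $f(y)=2$. The weight of $f$ is $\sum_{x\in V}f(x)$, and $\gamma_{sR}(G)$ is the minimum weight of an SRDF on $G$. The join $G_1\vee G_2$ of two graphs has vertex set $V(G_1)\cup V(G_2)$ (disjoint union) and edge set $E(G_1)\cup E(G_2)\cup\{uv: u\in V(G_1), v\in V(G_2)\}$. *)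

theory Defs
  imports Main
begin

definition simple_graph :: "'a set \<Rightarrow> ('a \<Rightarrow> 'a \<Rightarrow> bool) \<Rightarrow> bool" where
  "simple_graph V E \<longleftrightarrow> finite V \<and> (\<forall>x y. E x y \<longrightarrow> x \<in> V \<and> y \<in> V)
     \<and> (\<forall>x y. E x y \<longrightarrow> E y x) \<and> (\<forall>x. \<not> E x x)"

definition closed_nbhd :: "'a set \<Rightarrow> ('a \<Rightarrow> 'a \<Rightarrow> bool) \<Rightarrow> 'a \<Rightarrow> 'a set" where
  "closed_nbhd V E x = {y \<in> V. y = x \<or> E x y}"

definition is_SRDF :: "'a set \<Rightarrow> ('a \<Rightarrow> 'a \<Rightarrow> bool) \<Rightarrow> ('a \<Rightarrow> int) \<Rightarrow> bool" where
  "is_SRDF V E f \<longleftrightarrow>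
     (\<forall>x\<in>V. f x \<in> {-1, 1, 2}) \<and>
     (\<forall>x\<in>V. (\<Sum>y\<in>closed_nbhd V E x. f y) \<ge> 1) \<and>
     (\<forall>x\<in>V. f x = -1 \<longrightarrow> (\<exists>y\<in>V. E x y \<and> f y = 2))"

definition gamma_sR :: "'a set \<Rightarrow> ('a \<Rightarrow> 'a \<Rightarrow> bool) \<Rightarrow> int" where
  "gamma_sR V E = Min ((\<lambda>f. \<Sum>x\<in>V. f x) ` {f. is_SRDF V E f})"

definition join_V :: "'a set \<Rightarrow> 'b set \<Rightarrow> ('a + 'b) set" where
  "join_V V1 V2 = Inl ` V1 \<union> Inr ` V2"

fun join_E :: "('a set \<times> ('a \<Rightarrow> 'a \<Rightarrow> bool)) \<Rightarrow> ('b set \<times> ('b \<Rightarrow> 'b \<Rightarrow> bool))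
      \<Rightarrow> ('a + 'b) \<Rightarrow> ('a + 'b) \<Rightarrow> bool" where
  "join_E (V1, E1) (V2, E2) (Inl a) (Inl b) = E1 a b"
| "join_E (V1, E1) (V2, E2) (Inr a) (Inr b) = E2 a b"
| "join_E (V1, E1) (V2, E2) (Inl a) (Inr b) = (a \<in> V1 \<and> b \<in> V2)"
| "join_E (V1, E1) (V2, E2) (Inr a) (Inl b) = (a \<in> V2 \<and> b \<in> V1)"

end

theory Submission
  imports Defs
begin

text \<open>Take minimum-weight SRDFs f1 of G and f2 of H and let f agree with f1 on G and with f2
  on H. In G \<or> H the closed neighbourhood of a vertex of G is its closed neighbourhood in G
  together with all of H, so its f-sum is at least 1 + w(f2) \<ge> 1 because w(f2) = \<gamma>sR(H) \<ge> 0;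
  symmetrically for vertices of H. Vertices labelled -1 keep their neighbour labelled 2, so f is
  an SRDF of G \<or> H of weight \<gamma>sR(G) + \<gamma>sR(H).\<close>

lemma SRDF_weights_subset:
  "(\<lambda>f. \<Sum>x\<in>V. f x) ` {f. is_SRDF V E f} \<subseteq> {- int (card V) .. 2 * int (card V)}"
proof
  fix w assume "w \<in> (\<lambda>f. \<Sum>x\<in>V. f x) ` {f. is_SRDF V E f}"
  then obtain f where f: "is_SRDF V E f" and w: "w = (\<Sum>x\<in>V. f x)" by auto
  have range: "\<forall>x\<in>V. f x \<in> {-1, 1, 2}" using f unfolding is_SRDF_def by blast
  have "(\<Sum>x\<in>V. (-1::int)) \<le> (\<Sum>x\<in>V. f x)" by (rule sum_mono) (use range in auto)
  moreover have "(\<Sum>x\<in>V. f x) \<le> (\<Sum>x\<in>V. (2::int))" by (rule sum_mono) (use range in auto)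
  ultimately show "w \<in> {- int (card V) .. 2 * int (card V)}" using w by auto
qed

lemma finite_SRDF_weights: "finite ((\<lambda>f. \<Sum>x\<in>V. f x) ` {f. is_SRDF V E f})"
  using SRDF_weights_subset by (rule finite_subset) simp

lemma is_SRDF_const_one:
  assumes "finite V"
  shows "is_SRDF V E (\<lambda>_. 1)"
proof -
  have "(\<Sum>y\<in>closed_nbhd V E x. (1::int)) \<ge> 1" if "x \<in> V" for x
  proof -
    have "x \<in> closed_nbhd V E x" using that unfolding closed_nbhd_def by auto
    moreover have "finite (closed_nbhd V E x)" using assms unfolding closed_nbhd_def by auto
    ultimately show ?thesis by (auto simp: card_gt_0_iff Suc_le_eq)
  qed
  thus ?thesis unfolding is_SRDF_def by auto
qed

lemma gamma_sR_le:
  assumes "is_SRDF V E f"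
  shows "gamma_sR V E \<le> (\<Sum>x\<in>V. f x)"
  unfolding gamma_sR_def using finite_SRDF_weights assms by (auto intro: Min_le)

lemma gamma_sR_attained:
  assumes "finite V"
  obtains f where "is_SRDF V E f" and "gamma_sR V E = (\<Sum>x\<in>V. f x)"
proof -
  have "gamma_sR V E \<in> (\<lambda>f. \<Sum>x\<in>V. f x) ` {f. is_SRDF V E f}"
    unfolding gamma_sR_def using finite_SRDF_weights is_SRDF_const_one[OF assms]
    by (intro Min_in) auto
  thus ?thesis using that by auto
qed

lemma sum_join_V:
  assumes "finite V1" and "finite V2"
  shows "(\<Sum>x\<in>join_V V1 V2. case_sum f1 f2 x) = (\<Sum>x\<in>V1. f1 x) + (\<Sum>x\<in>V2. f2 x)"
  unfolding join_V_def using assms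
  by (subst sum.union_disjoint) (auto simp: sum.reindex)

lemma closed_nbhd_join_Inl:
  assumes "a \<in> V1"
  shows "closed_nbhd (join_V V1 V2) (join_E (V1, E1) (V2, E2)) (Inl a)
           = Inl ` closed_nbhd V1 E1 a \<union> Inr ` V2"
proof (rule set_eqI)
  fix y show "y \<in> closed_nbhd (join_V V1 V2) (join_E (V1, E1) (V2, E2)) (Inl a)
                \<longleftrightarrow> y \<in> Inl ` closed_nbhd V1 E1 a \<union> Inr ` V2"
    using assms by (cases y) (auto simp: closed_nbhd_def join_V_def)
qed

lemma closed_nbhd_join_Inr:
  assumes "b \<in> V2"
  shows "closed_nbhd (join_V V1 V2) (join_E (V1, E1) (V2, E2)) (Inr b)
           = Inl ` V1 \<union> Inr ` closed_nbhd V2 E2 b"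
proof (rule set_eqI)
  fix y show "y \<in> closed_nbhd (join_V V1 V2) (join_E (V1, E1) (V2, E2)) (Inr b)
                \<longleftrightarrow> y \<in> Inl ` V1 \<union> Inr ` closed_nbhd V2 E2 b"
    using assms by (cases y) (auto simp: closed_nbhd_def join_V_def)
qed

lemma finite_closed_nbhd: "finite V \<Longrightarrow> finite (closed_nbhd V E x)"
  unfolding closed_nbhd_def by auto

lemma sum_closed_nbhd_join_Inl:
  assumes "finite V1" "finite V2" "a \<in> V1"
  shows "(\<Sum>y\<in>closed_nbhd (join_V V1 V2) (join_E (V1, E1) (V2, E2)) (Inl a). case_sum f1 f2 y)
           = (\<Sum>y\<in>closed_nbhd V1 E1 a. f1 y) + (\<Sum>y\<in>V2. f2 y)"
  unfolding closed_nbhd_join_Inl[OF assms(3)] using assms(1,2)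
  by (subst sum.union_disjoint) (auto simp: finite_closed_nbhd sum.reindex)

lemma sum_closed_nbhd_join_Inr:
  assumes "finite V1" "finite V2" "b \<in> V2"
  shows "(\<Sum>y\<in>closed_nbhd (join_V V1 V2) (join_E (V1, E1) (V2, E2)) (Inr b). case_sum f1 f2 y)
           = (\<Sum>y\<in>V1. f1 y) + (\<Sum>y\<in>closed_nbhd V2 E2 b. f2 y)"
  unfolding closed_nbhd_join_Inr[OF assms(3)] using assms(1,2)
  by (subst sum.union_disjoint) (auto simp: finite_closed_nbhd sum.reindex)

lemma is_SRDF_join:
  assumes fin1: "finite V1" and fin2: "finite V2"
    and f1: "is_SRDF V1 E1 f1" and f2: "is_SRDF V2 E2 f2"
    and nonneg1: "(\<Sum>x\<in>V1. f1 x) \<ge> 0" and nonneg2: "(\<Sum>x\<in>V2. f2 x) \<ge> 0"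
  shows "is_SRDF (join_V V1 V2) (join_E (V1, E1) (V2, E2)) (case_sum f1 f2)"
  unfolding is_SRDF_def
proof (intro conjI ballI impI)
  fix x assume "x \<in> join_V V1 V2"
  thus "case_sum f1 f2 x \<in> {-1, 1, 2}" using f1 f2 unfolding is_SRDF_def join_V_def by auto
next
  fix x assume x: "x \<in> join_V V1 V2"
  show "(\<Sum>y\<in>closed_nbhd (join_V V1 V2) (join_E (V1, E1) (V2, E2)) x. case_sum f1 f2 y) \<ge> 1"
  proof (cases x)
    case (Inl a)
    with x have a: "a \<in> V1" unfolding join_V_def by auto
    with f1 have "(\<Sum>y\<in>closed_nbhd V1 E1 a. f1 y) \<ge> 1" unfolding is_SRDF_def by auto
    thus ?thesis using Inl sum_closed_nbhd_join_Inl[OF fin1 fin2 a, of f1 f2 E1 E2] nonneg2 by simp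
  next
    case (Inr b)
    with x have b: "b \<in> V2" unfolding join_V_def by auto
    with f2 have "(\<Sum>y\<in>closed_nbhd V2 E2 b. f2 y) \<ge> 1" unfolding is_SRDF_def by auto
    thus ?thesis using Inr sum_closed_nbhd_join_Inr[OF fin1 fin2 b, of f1 f2 E1 E2] nonneg1 by simp
  qed
next
  fix x assume x: "x \<in> join_V V1 V2" and minus: "case_sum f1 f2 x = -1"
  show "\<exists>y\<in>join_V V1 V2. join_E (V1, E1) (V2, E2) x y \<and> case_sum f1 f2 y = 2"
  proof (cases x)
    case (Inl a)
    with x minus f1 obtain c where "c \<in> V1" "E1 a c" "f1 c = 2"
      unfolding is_SRDF_def join_V_def by auto
    thus ?thesis using Inl by (intro bexI[of _ "Inl c"]) (auto simp: join_V_def)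
  next
    case (Inr b)
    with x minus f2 obtain c where "c \<in> V2" "E2 b c" "f2 c = 2"
      unfolding is_SRDF_def join_V_def by auto
    thus ?thesis using Inr by (intro bexI[of _ "Inr c"]) (auto simp: join_V_def)
  qed
qed

theorem mainTheorem3:
  fixes V1 :: "'a set" and E1 :: "'a \<Rightarrow> 'a \<Rightarrow> bool"
    and V2 :: "'b set" and E2 :: "'b \<Rightarrow> 'b \<Rightarrow> bool"
  assumes "simple_graph V1 E1" and "simple_graph V2 E2"
    and "gamma_sR V1 E1 \<ge> 0" and "gamma_sR V2 E2 \<ge> 0"
  shows "gamma_sR (join_V V1 V2) (join_E (V1, E1) (V2, E2))
           \<le> gamma_sR V1 E1 + gamma_sR V2 E2"
proof -
  have fin1: "finite V1" and fin2: "finite V2"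
    using assms(1,2) unfolding simple_graph_def by auto
  obtain f1 where f1: "is_SRDF V1 E1 f1" and w1: "gamma_sR V1 E1 = (\<Sum>x\<in>V1. f1 x)"
    using gamma_sR_attained[OF fin1] .
  obtain f2 where f2: "is_SRDF V2 E2 f2" and w2: "gamma_sR V2 E2 = (\<Sum>x\<in>V2. f2 x)"
    using gamma_sR_attained[OF fin2] .
  have "is_SRDF (join_V V1 V2) (join_E (V1, E1) (V2, E2)) (case_sum f1 f2)"
    using is_SRDF_join[OF fin1 fin2 f1 f2] assms(3,4) w1 w2 by simp
  from gamma_sR_le[OF this] show ?thesis
    by (simp add: sum_join_V[OF fin1 fin2] w1 w2)
qed

end
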